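(* Let $X$ be a regular topological space, let $\mathcal A(X)$ be a maximal strongly disjoint family of nonempty, regular open, $\varrho$-homogeneous subsets of $X$, and for $H\in\mathrm{RO}(X)$ let $\mathrm{tr}_X(H)=\{A\in\mathcal A(X): A\cap H\neq\emptyset\}$. Then for each $H\in\mathrm{RO}(X)$: (1) $\rho(H)=\prod\{\rho(A): A\in\mathrm{tr}_X(H)\}$; (2) $\rho(H)\ge 2^{|\mathrm{tr}_X(H)|}$; (3) $|\{B\in\mathrm{RO}(X): \mathrm{tr}_X(B)\subseteq\mathrm{tr}_X(H)\}|\le\rho(H)$.
   Context: $\mathrm{RO}(G)$ denotes the family of regular open subsets of an open set $G$ and $\rho(G)=|\mathrm{RO}(G)|$. An open set $A$ (as a subspace) is $\varrho$-homogeneous if $\rho(B)=\rho(A)$ for every nonempty regular open $B$ of $A$. A family $\mathcal E$ of subsets of $X$ is strongly disjoint if $\overline{E_0}\cap\overline{E_1}=\emptyset$ for all distinct $E_0,E_1\in\mathcal E$. *)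

theory Defs
  imports "HOL-Analysis.Analysis" "HOL-Library.Equipollence"
begin

definition regular_openin :: "'a topology \<Rightarrow> 'a set \<Rightarrow> bool" where
  "regular_openin X U \<longleftrightarrow> openin X U \<and> X interior_of (X closure_of U) = U"

definition RO :: "'a topology \<Rightarrow> 'a set \<Rightarrow> 'a set set" where
  "RO X G = {U. regular_openin (subtopology X G) U}"

definition rho_homogeneous :: "'a topology \<Rightarrow> 'a set \<Rightarrow> bool" where
  "rho_homogeneous X A \<longleftrightarrow>
     (\<forall>B \<in> RO X A. B \<noteq> {} \<longrightarrow> RO X B \<approx> RO X A)"

definition strongly_disjoint :: "'a topology \<Rightarrow> 'a set set \<Rightarrow> bool" where
  "strongly_disjoint X \<E> \<longleftrightarrow>
     (\<forall>E0 \<in> \<E>. \<forall>E1 \<in> \<E>. E0 \<noteq> E1 \<longrightarrow> (X closure_of E0) \<inter> (X closure_of E1) = {})"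

definition admissible_family :: "'a topology \<Rightarrow> 'a set set \<Rightarrow> bool" where
  "admissible_family X \<E> \<longleftrightarrow>
     (\<forall>A \<in> \<E>. A \<noteq> {} \<and> regular_openin X A \<and> rho_homogeneous X A) \<and>
     strongly_disjoint X \<E>"

definition maximal_admissible_family :: "'a topology \<Rightarrow> 'a set set \<Rightarrow> bool" where
  "maximal_admissible_family X \<A> \<longleftrightarrow>
     admissible_family X \<A> \<and>
     (\<forall>\<E>. admissible_family X \<E> \<and> \<A> \<subseteq> \<E> \<longrightarrow> \<E> = \<A>)"

definition tr :: "'a set set \<Rightarrow> 'a set \<Rightarrow> 'a set set" where
  "tr \<A> H = {A \<in> \<A>. A \<inter> H \<noteq> {}}"

end

theory Submission
  imports Defs
begin

text \<open>The union of a maximal admissible family is dense: by regularity, a nonempty open set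
  missing it contains a nonempty regular open set whose closure avoids the closures of all
  members, and inside that set a nonempty regular open set of minimal rho is rho-homogeneous and
  could be added to the family. Density makes every regular open set B the regularization
  of B \<inter> \<Union>\<A>, so B is determined by its traces B \<inter> A on the members A.
  Conversely, regular open pieces of the pairwise disjoint open members glue to the regularization
  of their union, so restriction is a bijection from RO(H) onto the product of the RO(A \<inter> H),
  and rho-homogeneity replaces RO(A \<inter> H) by RO(A). Choosing \<emptyset> or A in each coordinate gives
  (2), and restriction embeds the sets in (3) into the same product.\<close>

abbreviation regularization :: "'a topology \<Rightarrow> 'a set \<Rightarrow> 'a set" where
  "regularization X S \<equiv> X interior_of (X closure_of S)"

lemma openin_subset_regularization: "openin X U \<Longrightarrow> U \<subseteq> regularization X U"
  by (meson closure_of_subset interior_of_maximal openin_subset)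

lemma regularization_mono: "S \<subseteq> T \<Longrightarrow> regularization X S \<subseteq> regularization X T"
  by (simp add: closure_of_mono interior_of_mono)

lemma closure_of_regularization_subset: "X closure_of (regularization X S) \<subseteq> X closure_of S"
  by (metis closure_of_closure_of closure_of_mono interior_of_subset)

lemma regular_openin_regularization: "regular_openin X (regularization X S)"
proof -
  have "regularization X (regularization X S) \<subseteq> regularization X S"
    by (simp add: closure_of_regularization_subset interior_of_mono)
  then show ?thesis
    unfolding regular_openin_def by (simp add: openin_subset_regularization subset_antisym)
qed

lemma regular_openin_empty [simp]: "regular_openin X {}"
  by (simp add: regular_openin_def)

lemma regular_openin_Int:
  assumes "regular_openin X U" "regular_openin X V"
  shows "regular_openin X (U \<inter> V)"
proof -
  have "regularization X (U \<inter> V) \<subseteq> U \<inter> V"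
    using regularization_mono[of "U \<inter> V" U X] regularization_mono[of "U \<inter> V" V X] assms
    unfolding regular_openin_def by blast
  then show ?thesis
    using assms openin_subset_regularization[of X "U \<inter> V"]
    unfolding regular_openin_def by blast
qed

lemma RO_eq_regular_subsets:
  assumes "regular_openin X H"
  shows "RO X H = {U. regular_openin X U \<and> U \<subseteq> H}"
proof -
  have H: "openin X H" "regularization X H = H"
    using assms unfolding regular_openin_def by auto
  have "regular_openin (subtopology X H) U \<longleftrightarrow> regular_openin X U \<and> U \<subseteq> H" for U
  proof (cases "U \<subseteq> H")
    case True
    then have "subtopology X H interior_of (subtopology X H closure_of U) = regularization X U"
      using H regularization_mono[OF True, of X]
      by (simp add: closure_of_subtopology_open interior_of_subtopology_open interior_of_Int
          interior_of_openin Int_absorb1)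
    then show ?thesis
      using True H(1) by (simp add: regular_openin_def openin_open_subtopology)
  next
    case False
    then show ?thesis
      using openin_subset[of "subtopology X H" U] by (auto simp: regular_openin_def)
  qed
  then show ?thesis
    by (simp add: RO_def)
qed

lemma ex_lepoll_minimal:
  fixes f :: "'a \<Rightarrow> 'b set"
  assumes "S \<noteq> {}"
  shows "\<exists>x\<in>S. \<forall>y\<in>S. f x \<lesssim> f y"
proof -
  have "card_of ` f ` S \<noteq> {}" "\<forall>r \<in> card_of ` f ` S. Well_order r"
    using assms card_of_Well_order by auto
  then obtain x where "x \<in> S" "\<forall>y \<in> S. (card_of (f x), card_of (f y)) \<in> ordLeq"
    using exists_minim_Well_order[of "card_of ` f ` S"] by auto
  then show ?thesis
    using card_of_ordLeq lepoll_def by metis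
qed

lemma ex_rho_homogeneous_subset:
  assumes "regular_openin X V" "V \<noteq> {}"
  obtains W where "regular_openin X W" "W \<noteq> {}" "W \<subseteq> V" "rho_homogeneous X W"
proof -
  define F where "F = {W. regular_openin X W \<and> W \<noteq> {} \<and> W \<subseteq> V}"
  have "V \<in> F"
    using assms by (simp add: F_def)
  then obtain W where "W \<in> F" and minimal: "\<And>W'. W' \<in> F \<Longrightarrow> RO X W \<lesssim> RO X W'"
    using ex_lepoll_minimal[of F "RO X"] by blast
  then have W: "regular_openin X W" "W \<noteq> {}" "W \<subseteq> V"
    by (auto simp: F_def)
  have "RO X B \<approx> RO X W" if "B \<in> RO X W" "B \<noteq> {}" for B
  proof (rule lepoll_antisym)
    have B: "regular_openin X B" "B \<subseteq> W"
      using that by (auto simp: RO_eq_regular_subsets[OF W(1)])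
    then show "RO X B \<lesssim> RO X W"
      by (auto intro!: subset_imp_lepoll simp: RO_eq_regular_subsets[OF W(1)] RO_eq_regular_subsets[OF B(1)])
    show "RO X W \<lesssim> RO X B"
      using B W(3) that(2) by (intro minimal) (simp add: F_def)
  qed
  then have "rho_homogeneous X W"
    by (simp add: rho_homogeneous_def)
  with W that show thesis
    by blast
qed

lemma regular_space_ex_regular_openin_closure_subset:
  assumes "regular_space X" "openin X U" "x \<in> U"
  obtains V where "regular_openin X V" "x \<in> V" "X closure_of V \<subseteq> U"
proof -
  have "closedin X (topspace X - U)" "x \<in> topspace X - (topspace X - U)"
    using assms(2,3) openin_subset by blast+
  then obtain W where W: "openin X W" "x \<in> W" "disjnt (topspace X - U) (X closure_of W)"
    using assms(1) unfolding regular_space by blast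
  then have closure_W: "X closure_of W \<subseteq> U"
    using closure_of_subset_topspace[of X W] unfolding disjnt_def by blast
  show thesis
  proof (rule that)
    show "regular_openin X (regularization X W)"
      by (rule regular_openin_regularization)
    show "x \<in> regularization X W"
      using W openin_subset_regularization by blast
    show "X closure_of (regularization X W) \<subseteq> U"
      using closure_of_regularization_subset closure_W by (rule order_trans)
  qed
qed

lemma strongly_disjoint_imp_pairwise_disjnt:
  assumes "strongly_disjoint X \<E>" "\<And>E. E \<in> \<E> \<Longrightarrow> E \<subseteq> topspace X"
  shows "pairwise disjnt \<E>"
  unfolding pairwise_def disjnt_def
proof (intro ballI impI)
  fix E E' assume E: "E \<in> \<E>" "E' \<in> \<E>" "E \<noteq> E'"
  then have "X closure_of E \<inter> X closure_of E' = {}"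
    using assms(1) by (simp add: strongly_disjoint_def)
  moreover have "E \<subseteq> X closure_of E" "E' \<subseteq> X closure_of E'"
    using assms(2) E by (simp_all add: closure_of_subset)
  ultimately show "E \<inter> E' = {}"
    by blast
qed

lemma admissible_family_insert:
  assumes "admissible_family X \<A>" "W \<noteq> {}" "regular_openin X W" "rho_homogeneous X W"
    and "\<And>A. A \<in> \<A> \<Longrightarrow> X closure_of A \<inter> X closure_of W = {}"
  shows "admissible_family X (insert W \<A>)"
  using assms unfolding admissible_family_def strongly_disjoint_def
  by (simp add: Int_commute)

lemma maximal_admissible_familyD:
  assumes "maximal_admissible_family X \<A>" "A \<in> \<A>"
  shows "A \<noteq> {}" "regular_openin X A" "rho_homogeneous X A"
  using assms by (auto simp: maximal_admissible_family_def admissible_family_def)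

lemma maximal_admissible_family_pairwise_disjnt:
  assumes "maximal_admissible_family X \<A>"
  shows "pairwise disjnt \<A>"
proof (rule strongly_disjoint_imp_pairwise_disjnt)
  show "strongly_disjoint X \<A>"
    using assms by (simp add: maximal_admissible_family_def admissible_family_def)
  show "A \<subseteq> topspace X" if "A \<in> \<A>" for A
    using maximal_admissible_familyD(2)[OF assms that]
    by (simp add: regular_openin_def openin_subset)
qed

lemma maximal_admissible_family_dense:
  assumes "regular_space X" "maximal_admissible_family X \<A>"
  shows "X closure_of \<Union>\<A> = topspace X"
  unfolding dense_intersects_open
proof (intro allI impI notI)
  fix U assume U: "openin X U \<and> U \<noteq> {}" and disjoint: "\<Union>\<A> \<inter> U = {}"
  then obtain x where "x \<in> U"
    by blast
  then obtain V where V: "regular_openin X V" "x \<in> V" "X closure_of V \<subseteq> U"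
    using regular_space_ex_regular_openin_closure_subset assms(1) U by metis
  then obtain W where W: "regular_openin X W" "W \<noteq> {}" "W \<subseteq> V" "rho_homogeneous X W"
    using ex_rho_homogeneous_subset by blast
  have closure_W: "X closure_of W \<subseteq> U"
    using closure_of_mono[OF W(3)] V(3) by blast
  have "X closure_of A \<inter> X closure_of W = {}" if "A \<in> \<A>" for A
  proof -
    have "U \<inter> X closure_of A = {}"
      using disjoint that U openin_Int_closure_of_eq_empty by blast
    with closure_W show ?thesis
      by blast
  qed
  then have "admissible_family X (insert W \<A>)"
    using assms(2) W by (intro admissible_family_insert) (auto simp: maximal_admissible_family_def)
  then have "W \<in> \<A>"
    using assms(2) unfolding maximal_admissible_family_def by blast
  moreover have "W \<subseteq> U"
    using W(1) closure_W closure_of_subset[of W X] by (auto simp: regular_openin_def openin_subset)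
  ultimately show False
    using W(2) disjoint by blast
qed

lemma regularization_Int_dense:
  assumes "X closure_of D = topspace X" "regular_openin X B"
  shows "regularization X (B \<inter> D) = B"
proof
  have B: "openin X B" "regularization X B = B"
    using assms(2) by (auto simp: regular_openin_def)
  show "regularization X (B \<inter> D) \<subseteq> B"
    using regularization_mono[of "B \<inter> D" B X] B(2) by blast
  have "B \<inter> X closure_of D = B \<inter> X closure_of (B \<inter> D)"
    using B(1) by (rule openin_Int_closure_of_eq)
  then have "B \<subseteq> X closure_of (B \<inter> D)"
    using assms(1) openin_subset[OF B(1)] by blast
  then show "B \<subseteq> regularization X (B \<inter> D)"
    using B(1) by (simp add: interior_of_maximal)
qed

lemma regular_openin_eq_by_traces:
  assumes "X closure_of \<Union>\<A> = topspace X" "regular_openin X B" "regular_openin X B'"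
    and "\<And>A. A \<in> \<A> \<Longrightarrow> B \<inter> A = B' \<inter> A"
  shows "B = B'"
proof -
  have "B \<inter> \<Union>\<A> = B' \<inter> \<Union>\<A>"
    using assms(4) by blast
  then show ?thesis
    using regularization_Int_dense[OF assms(1)] assms(2,3) by metis
qed

lemma regularization_UN_Int:
  assumes "pairwise disjnt \<A>" "\<And>A. A \<in> \<A> \<Longrightarrow> openin X A"
    and "\<And>A. A \<in> \<A> \<Longrightarrow> regular_openin X (c A) \<and> c A \<subseteq> A" and "A \<in> \<A>"
  shows "regularization X (\<Union>A\<in>\<A>. c A) \<inter> A = c A"
proof
  let ?S = "\<Union>A\<in>\<A>. c A"
  have A: "openin X A" "regular_openin X (c A)" "c A \<subseteq> A"
    using assms(2-4) by auto
  have trace: "A \<inter> c A' \<subseteq> c A" if "A' \<in> \<A>" for A'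
  proof (cases "A' = A")
    case False
    then have "A \<inter> A' = {}"
      using assms(1,4) that by (simp add: pairwise_def disjnt_def)
    then show ?thesis
      using assms(3)[OF that] by blast
  qed simp
  have "A \<inter> ?S \<subseteq> c A"
  proof
    fix y assume "y \<in> A \<inter> ?S"
    then obtain A' where "A' \<in> \<A>" "y \<in> A \<inter> c A'"
      by blast
    then show "y \<in> c A"
      using trace by blast
  qed
  moreover have "c A \<subseteq> A \<inter> ?S"
    using A(3) assms(4) by blast
  ultimately have trace_S: "A \<inter> ?S = c A"
    by (rule subset_antisym)
  have "regularization X ?S \<inter> A \<subseteq> A \<inter> X closure_of ?S"
    using interior_of_subset[of X "X closure_of ?S"] by auto
  also have "\<dots> \<subseteq> X closure_of (A \<inter> ?S)"
    by (rule openin_Int_closure_of_subset[OF A(1)])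
  finally have "regularization X ?S \<inter> A \<subseteq> regularization X (c A)"
    using A(1) trace_S by (simp add: interior_of_maximal openin_Int)
  then show "regularization X ?S \<inter> A \<subseteq> c A"
    using A(2) by (simp add: regular_openin_def)
  have "openin X ?S"
    using assms(3) by (auto simp: regular_openin_def)
  then show "c A \<subseteq> regularization X ?S \<inter> A"
    using openin_subset_regularization[of X ?S] A(3) assms(4) by blast
qed

lemma inj_on_traces:
  assumes "X closure_of \<Union>\<A> = topspace X"
  shows "inj_on (\<lambda>B. \<lambda>A\<in>T. B \<inter> A) {B. regular_openin X B \<and> tr \<A> B \<subseteq> T}"
proof (rule inj_onI)
  fix B B' assume B: "B \<in> {B. regular_openin X B \<and> tr \<A> B \<subseteq> T}"
    and B': "B' \<in> {B. regular_openin X B \<and> tr \<A> B \<subseteq> T}"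
    and traces: "(\<lambda>A\<in>T. B \<inter> A) = (\<lambda>A\<in>T. B' \<inter> A)"
  have "B \<inter> A = B' \<inter> A" if "A \<in> \<A>" for A
  proof (cases "A \<in> T")
    case True
    then show ?thesis
      using fun_cong[OF traces, of A] by simp
  next
    case False
    then show ?thesis
      using that B B' by (auto simp: tr_def)
  qed
  then show "B = B'"
    using regular_openin_eq_by_traces[OF assms] B B' by blast
qed

lemma bij_betw_RO_traces:
  assumes "\<And>A. A \<in> \<A> \<Longrightarrow> regular_openin X A" "pairwise disjnt \<A>"
    and "X closure_of \<Union>\<A> = topspace X" "regular_openin X H"
  shows "bij_betw (\<lambda>B. \<lambda>A\<in>tr \<A> H. B \<inter> A) (RO X H) (\<Pi>\<^sub>E A\<in>tr \<A> H. RO X (A \<inter> H))"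
proof (rule bij_betw_imageI)
  let ?T = "tr \<A> H"
  let ?traces = "\<lambda>B. \<lambda>A\<in>?T. B \<inter> A"
  have T: "regular_openin X A" "openin X A" if "A \<in> ?T" for A
    using that assms(1) by (auto simp: tr_def regular_openin_def)
  have T_disjoint: "pairwise disjnt ?T"
    using assms(2) by (rule pairwise_subset) (auto simp: tr_def)
  have "RO X H \<subseteq> {B. regular_openin X B \<and> tr \<A> B \<subseteq> ?T}"
    by (auto simp: RO_eq_regular_subsets[OF assms(4)] tr_def)
  then show "inj_on ?traces (RO X H)"
    using inj_on_traces[OF assms(3)] by (rule inj_on_subset[rotated])
  show "?traces ` RO X H = (\<Pi>\<^sub>E A\<in>?T. RO X (A \<inter> H))"
  proof
    show "?traces ` RO X H \<subseteq> (\<Pi>\<^sub>E A\<in>?T. RO X (A \<inter> H))"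
      using T(1) assms(4)
      by (auto simp: RO_eq_regular_subsets regular_openin_Int)
  next
    show "(\<Pi>\<^sub>E A\<in>?T. RO X (A \<inter> H)) \<subseteq> ?traces ` RO X H"
    proof
      fix c assume c: "c \<in> (\<Pi>\<^sub>E A\<in>?T. RO X (A \<inter> H))"
      have c_RO: "regular_openin X (c A) \<and> c A \<subseteq> A \<inter> H" if "A \<in> ?T" for A
        using c that RO_eq_regular_subsets[OF regular_openin_Int[OF T(1)[OF that] assms(4)]] by auto
      define B where "B = regularization X (\<Union>A\<in>?T. c A)"
      have "B \<in> RO X H"
      proof -
        have "(\<Union>A\<in>?T. c A) \<subseteq> H"
          using c_RO by blast
        then have "B \<subseteq> H"
          using regularization_mono assms(4) unfolding B_def regular_openin_def by blast
        then show ?thesis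
          by (simp add: RO_eq_regular_subsets[OF assms(4)] B_def regular_openin_regularization)
      qed
      moreover have "?traces B = c"
      proof (rule extensionalityI[of _ ?T])
        show "c \<in> extensional ?T"
          using c by (simp add: PiE_iff)
        show "?traces B A = c A" if "A \<in> ?T" for A
          unfolding B_def using regularization_UN_Int[OF T_disjoint T(2) _ that] c_RO
          by (simp add: that)
      qed simp
      ultimately show "c \<in> ?traces ` RO X H"
        by blast
    qed
  qed
qed

lemma eqpoll_PiE:
  assumes "\<And>i. i \<in> I \<Longrightarrow> F i \<approx> G i"
  shows "(\<Pi>\<^sub>E i\<in>I. F i) \<approx> (\<Pi>\<^sub>E i\<in>I. G i)"
  using assms by (intro lepoll_antisym lepoll_PiE) (simp_all add: eqpoll_imp_lepoll eqpoll_sym)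

lemma Pow_lepoll_PiE:
  assumes "\<And>i. i \<in> I \<Longrightarrow> a i \<in> F i \<and> b i \<in> F i \<and> a i \<noteq> b i"
  shows "Pow I \<lesssim> (\<Pi>\<^sub>E i\<in>I. F i)"
  unfolding lepoll_def
proof (intro exI conjI)
  let ?g = "\<lambda>S. \<lambda>i\<in>I. if i \<in> S then a i else b i"
  show "inj_on ?g (Pow I)"
  proof (rule inj_onI)
    fix S S' assume "S \<in> Pow I" "S' \<in> Pow I" and eq: "?g S = ?g S'"
    have "i \<in> S \<longleftrightarrow> i \<in> S'" if "i \<in> I" for i
      using fun_cong[OF eq, of i] assms[OF that] that by (auto split: if_splits)
    with \<open>S \<in> Pow I\<close> \<open>S' \<in> Pow I\<close> show "S = S'"
      by blast
  qed
  show "?g ` Pow I \<subseteq> (\<Pi>\<^sub>E i\<in>I. F i)"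
    using assms by auto
qed

lemma regular_openin_trace_subset_lepoll:
  assumes "\<And>A. A \<in> \<A> \<Longrightarrow> regular_openin X A" "X closure_of \<Union>\<A> = topspace X"
    and "T \<subseteq> \<A>"
  shows "{B. regular_openin X B \<and> tr \<A> B \<subseteq> T} \<lesssim> (\<Pi>\<^sub>E A\<in>T. RO X A)"
  unfolding lepoll_def
proof (intro exI conjI)
  show "inj_on (\<lambda>B. \<lambda>A\<in>T. B \<inter> A) {B. regular_openin X B \<and> tr \<A> B \<subseteq> T}"
    using assms(2) by (rule inj_on_traces)
  show "(\<lambda>B. \<lambda>A\<in>T. B \<inter> A) ` {B. regular_openin X B \<and> tr \<A> B \<subseteq> T} \<subseteq> (\<Pi>\<^sub>E A\<in>T. RO X A)"
    using assms(1,3) by (auto simp: RO_eq_regular_subsets regular_openin_Int)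
qed

lemma rho_homogeneous_RO_Int_eqpoll:
  assumes "rho_homogeneous X A" "regular_openin X A" "regular_openin X H" "A \<inter> H \<noteq> {}"
  shows "RO X (A \<inter> H) \<approx> RO X A"
  using assms regular_openin_Int[OF assms(2,3)] unfolding rho_homogeneous_def
  by (simp add: RO_eq_regular_subsets[OF assms(2)])

theorem lemma5:
  fixes X :: "'a topology" and \<A> :: "'a set set" and H :: "'a set"
  assumes "regular_space X"
    and "maximal_admissible_family X \<A>"
    and "regular_openin X H"
  shows "RO X H \<approx> (\<Pi>\<^sub>E A \<in> tr \<A> H. RO X A)
     \<and> Pow (tr \<A> H) \<lesssim> RO X H
     \<and> {B. regular_openin X B \<and> tr \<A> B \<subseteq> tr \<A> H} \<lesssim> RO X H"
proof -
  note members = maximal_admissible_familyD[OF assms(2)]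
  have dense: "X closure_of \<Union>\<A> = topspace X"
    using assms(1,2) by (rule maximal_admissible_family_dense)
  have "RO X H \<approx> (\<Pi>\<^sub>E A \<in> tr \<A> H. RO X (A \<inter> H))"
    using bij_betw_RO_traces[OF members(2) maximal_admissible_family_pairwise_disjnt[OF assms(2)]
        dense assms(3)]
    unfolding eqpoll_def by blast
  also have "\<dots> \<approx> (\<Pi>\<^sub>E A \<in> tr \<A> H. RO X A)"
    using members assms(3) by (intro eqpoll_PiE rho_homogeneous_RO_Int_eqpoll) (auto simp: tr_def)
  finally have product: "RO X H \<approx> (\<Pi>\<^sub>E A \<in> tr \<A> H. RO X A)" .
  then have product_lepoll: "(\<Pi>\<^sub>E A \<in> tr \<A> H. RO X A) \<lesssim> RO X H"
    by (simp add: eqpoll_imp_lepoll eqpoll_sym)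
  have Pow_lepoll: "Pow (tr \<A> H) \<lesssim> (\<Pi>\<^sub>E A \<in> tr \<A> H. RO X A)"
    using members by (intro Pow_lepoll_PiE[where a = id and b = "\<lambda>_. {}"])
      (auto simp: tr_def RO_eq_regular_subsets)
  have traces_lepoll:
    "{B. regular_openin X B \<and> tr \<A> B \<subseteq> tr \<A> H} \<lesssim> (\<Pi>\<^sub>E A \<in> tr \<A> H. RO X A)"
    using members(2) dense by (rule regular_openin_trace_subset_lepoll) (auto simp: tr_def)
  show ?thesis
    using product lepoll_trans[OF Pow_lepoll product_lepoll]
      lepoll_trans[OF traces_lepoll product_lepoll] by blast
qed

end
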